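(* Let $0<c_1,c_2<1$ and $0<\eta\le1$ be constants and let $m$ be a sufficiently large integer. Let $H$ be a $3$-uniform hypergraph whose vertex set is the disjoint union of sets $A$ and $B$, such that every edge of $H$ contains exactly one vertex of $A$ and two vertices of $B$, with $|A|=c_1 m$ and $|B|\geq c_2 2^{m^2}$. If $d_3\left(A,\binom{B}{2}\right)\geq\eta$, then there exists a complete $3$-partite $3$-uniform hypergraph $H'(A',B',B'')$ contained in $H$, with $A'\subseteq A$, $B'$ and $B''$ disjoint subsets of $B$, and $|A'|=|B'|=|B''|=\eta|A|/2$.
   Context: $d_3\left(A,\binom{B}{2}\right)$ denotes the number of edges of $H$ (each consisting of one vertex of $A$ and a pair from $B$) divided by $|A|\binom{|B|}{2}$. A complete $3$-partite $3$-graph $H'(A',B',B'')$ contains every triple with one vertex in each of $A',B',B''$. *)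

theory Defs
  imports Complex_Main
begin

definition AB_3graph :: "'a set set \<Rightarrow> 'a set \<Rightarrow> 'a set \<Rightarrow> bool" where
  "AB_3graph H A B \<longleftrightarrow> A \<inter> B = {} \<and>
     (\<forall>e\<in>H. e \<subseteq> A \<union> B \<and> card e = 3 \<and> card (e \<inter> A) = 1 \<and> card (e \<inter> B) = 2)"

definition d3 :: "'a set set \<Rightarrow> 'a set \<Rightarrow> 'a set \<Rightarrow> real" where
  "d3 H A B = real (card H) / (real (card A) * real (card B choose 2))"

definition contains_complete_3partite :: "'a set set \<Rightarrow> 'a set \<Rightarrow> 'a set \<Rightarrow> 'a set \<Rightarrow> bool" where
  "contains_complete_3partite H A' B' B'' \<longleftrightarrow>
     (\<forall>a\<in>A'. \<forall>b\<in>B'. \<forall>b'\<in>B''. {a, b, b'} \<in> H)"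

end

theory Submission
  imports Defs "HOL-Real_Asymp.Real_Asymp"
begin

(*
  Every edge {a, x, y} of H puts a into the link of the pair (x, y) of B. With
  t = floor (eta |A| / 2), density eta forces a proportion of at least about 1 / (2 |A|)
  of the ordered pairs of B to have links of size at least t. Choosing a t-subset of the
  link for each such pair and pigeonholing over the at most 2^|A| possible choices yields
  one t-set S of A together with a graph on B of density at least 1 / (2 |A| 2^|A|), every
  edge of which extends S to edges of H. Since |B| >= c2 2^(m^2) is far larger than
  (8 |A| 2^|A| t)^(t+1), the Kovari-Sos-Turan counting argument finds a complete bipartite
  graph K_{t,t} in it, and its two sides together with S span the required complete
  3-partite hypergraph.
*)

lemma sum_le_card_threshold:
  fixes f :: "'b \<Rightarrow> nat"
  assumes "finite P" "\<And>q. q \<in> P \<Longrightarrow> f q \<le> k"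
  shows "sum f P \<le> card {q\<in>P. t \<le> f q} * k + card P * (t - 1)"
proof -
  define L where "L = {q\<in>P. t \<le> f q}"
  have "sum f P = sum f L + sum f (P - L)"
    using \<open>finite P\<close> sum.subset_diff[of L P f] by (simp add: L_def)
  also have "\<dots> \<le> card L * k + card (P - L) * (t - 1)"
    using sum_bounded_above[of L f k] sum_bounded_above[of "P - L" f "t - 1"] assms(2)
    by (force simp: L_def intro: add_mono)
  also have "\<dots> \<le> card L * k + card P * (t - 1)"
    using card_mono[OF \<open>finite P\<close>, of "P - L"] by simp
  finally show ?thesis
    unfolding L_def .
qed

lemma ex_subset_contained_in_many:
  fixes N :: "'b \<Rightarrow> 'a set"
  assumes "finite A" "finite P" "\<And>q. q \<in> P \<Longrightarrow> N q \<subseteq> A" "t \<le> card A"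
  shows "\<exists>S\<subseteq>A. card S = t \<and> card {q\<in>P. t \<le> card (N q)} \<le> 2 ^ card A * card {q\<in>P. S \<subseteq> N q}"
proof -
  define SS where "SS = {S. S \<subseteq> A \<and> card S = t}"
  define f where "f S = card {q\<in>P. S \<subseteq> N q}" for S
  have "finite SS" "SS \<noteq> {}"
    unfolding SS_def using \<open>finite A\<close> obtain_subset_with_card_n[OF \<open>t \<le> card A\<close>] by auto
  then obtain S0 where "S0 \<in> SS" and S0_max: "\<And>S. S \<in> SS \<Longrightarrow> f S \<le> f S0"
    using Max_in[of "f ` SS"] Max_ge[of "f ` SS"] by fastforce
  have "{q\<in>P. t \<le> card (N q)} \<subseteq> (\<Union>S\<in>SS. {q\<in>P. S \<subseteq> N q})"
  proof
    fix q assume "q \<in> {q\<in>P. t \<le> card (N q)}"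
    then obtain S where "S \<subseteq> N q" "card S = t" "q \<in> P"
      by (auto elim: obtain_subset_with_card_n)
    then show "q \<in> (\<Union>S\<in>SS. {q\<in>P. S \<subseteq> N q})"
      using assms(3) unfolding SS_def by blast
  qed
  then have "card {q\<in>P. t \<le> card (N q)} \<le> card (\<Union>S\<in>SS. {q\<in>P. S \<subseteq> N q})"
    using \<open>finite SS\<close> \<open>finite P\<close> by (intro card_mono) auto
  also have "\<dots> \<le> (\<Sum>S\<in>SS. f S)"
    unfolding f_def by (rule card_UN_le) fact
  also have "\<dots> \<le> card SS * f S0"
    using sum_bounded_above[of SS f "f S0"] S0_max by simp
  also have "card SS \<le> 2 ^ card A"
    using n_subsets[OF \<open>finite A\<close>, of t] binomial_le_pow2 unfolding SS_def by simp
  finally show ?thesis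
    using \<open>S0 \<in> SS\<close> unfolding SS_def f_def by (auto intro: order_trans)
qed

lemma real_choose_two: "real (n choose 2) = real n * (real n - 1) / 2"
  by (cases n) (simp_all add: choose_two real_of_nat_div algebra_simps)

lemma sum_card_choose_eq_sum_card_containing:
  fixes I :: "'b \<Rightarrow> 'a set"
  assumes "finite X" "finite Y" "\<And>y. y \<in> Y \<Longrightarrow> I y \<subseteq> X"
  shows "(\<Sum>y\<in>Y. card (I y) choose t) = (\<Sum>T | T \<subseteq> X \<and> card T = t. card {y\<in>Y. T \<subseteq> I y})"
proof -
  define TT where "TT = {T. T \<subseteq> X \<and> card T = t}"
  have "finite TT" unfolding TT_def using \<open>finite X\<close> by simp
  have "card (I y) choose t = card {T\<in>TT. T \<subseteq> I y}" if "y \<in> Y" for y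
  proof -
    have "{T\<in>TT. T \<subseteq> I y} = {T. T \<subseteq> I y \<and> card T = t}"
      unfolding TT_def using assms(3)[OF that] by auto
    then show ?thesis
      using n_subsets[OF finite_subset[OF assms(3)[OF that] \<open>finite X\<close>]] by simp
  qed
  then have "(\<Sum>y\<in>Y. card (I y) choose t) = (\<Sum>y\<in>Y. \<Sum>T\<in>{T\<in>TT. T \<subseteq> I y}. 1)"
    by simp
  also have "\<dots> = (\<Sum>T\<in>TT. \<Sum>y\<in>{y\<in>Y. T \<subseteq> I y}. 1)"
    by (rule sum.swap_restrict) fact+
  finally show ?thesis unfolding TT_def by simp
qed

lemma complete_bipartite_if_many_high_indegree:
  fixes E :: "('a \<times> 'a) set"
  assumes "finite B" and irrefl: "\<And>x. (x, x) \<notin> E"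
    and many: "D \<le> card {y\<in>B. D \<le> card {x\<in>B. (x, y) \<in> E}}"
    and binomial: "(t - 1) * (card B choose t) < D * (D choose t)"
  shows "\<exists>T U. T \<subseteq> B \<and> U \<subseteq> B \<and> T \<inter> U = {} \<and> card T = t \<and> card U = t \<and> T \<times> U \<subseteq> E"
proof -
  define I where "I y = {x\<in>B. (x, y) \<in> E}" for y
  define V where "V = {y\<in>B. D \<le> card (I y)}"
  define TT where "TT = {T. T \<subseteq> B \<and> card T = t}"
  have "D * (D choose t) \<le> card V * (D choose t)"
    using many unfolding V_def I_def by simp
  also have "\<dots> \<le> (\<Sum>y\<in>V. card (I y) choose t)"
    using sum_mono[of V "\<lambda>_. D choose t" "\<lambda>y. card (I y) choose t"]
    by (simp add: V_def binomial_right_mono)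
  also have "\<dots> \<le> (\<Sum>y\<in>B. card (I y) choose t)"
    by (rule sum_mono2) (use \<open>finite B\<close> in \<open>auto simp: V_def\<close>)
  also have "\<dots> = (\<Sum>T\<in>TT. card {y\<in>B. T \<subseteq> I y})"
    unfolding TT_def by (rule sum_card_choose_eq_sum_card_containing) (auto simp: I_def \<open>finite B\<close>)
  finally have count: "D * (D choose t) \<le> (\<Sum>T\<in>TT. card {y\<in>B. T \<subseteq> I y})" .
  have "\<exists>T\<in>TT. t \<le> card {y\<in>B. T \<subseteq> I y}"
  proof (rule ccontr)
    assume "\<not> ?thesis"
    then have "(\<Sum>T\<in>TT. card {y\<in>B. T \<subseteq> I y}) \<le> (\<Sum>T\<in>TT. t - 1)"
      by (intro sum_mono) auto
    also have "\<dots> = (t - 1) * (card B choose t)"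
      using n_subsets[OF \<open>finite B\<close>, of t] unfolding TT_def by simp
    finally show False using count binomial by linarith
  qed
  then obtain T where "T \<in> TT" and many_U: "t \<le> card {y\<in>B. T \<subseteq> I y}"
    by blast
  then have T: "T \<subseteq> B" "card T = t"
    unfolding TT_def by auto
  from many_U obtain U where U: "U \<subseteq> {y\<in>B. T \<subseteq> I y}" "card U = t"
    by (meson obtain_subset_with_card_n)
  have "T \<times> U \<subseteq> E"
    using U unfolding I_def by auto
  moreover have "T \<inter> U = {}"
  proof (rule ccontr)
    assume "T \<inter> U \<noteq> {}"
    then obtain z where "z \<in> T" "z \<in> U"
      by blast
    with \<open>T \<times> U \<subseteq> E\<close> irrefl show False
      by blast
  qed
  ultimately show ?thesis
    using T U by (intro exI[of _ T] exI[of _ U]) auto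
qed

lemma many_vertices_of_high_indegree:
  fixes E :: "('a \<times> 'a) set"
  assumes "finite B" "E \<subseteq> B \<times> B" "0 < r" "4 * r * D \<le> card B"
    and dense: "card B ^ 2 \<le> 2 * r * card E"
  shows "D \<le> card {y\<in>B. D \<le> card {x\<in>B. (x, y) \<in> E}}"
proof -
  define n where "n = card B"
  define I where "I y = {x\<in>B. (x, y) \<in> E}" for y
  define V where "V = {y\<in>B. D \<le> card (I y)}"
  have "E \<subseteq> (\<Union>y\<in>B. I y \<times> {y})"
    using \<open>E \<subseteq> B \<times> B\<close> unfolding I_def by auto
  then have "card E \<le> card (\<Union>y\<in>B. I y \<times> {y})"
    by (rule card_mono[rotated]) (simp add: I_def \<open>finite B\<close>)
  also have "\<dots> \<le> (\<Sum>y\<in>B. card (I y \<times> {y}))"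
    by (rule card_UN_le) fact
  also have "\<dots> = (\<Sum>y\<in>V. card (I y)) + (\<Sum>y\<in>B - V. card (I y))"
    using \<open>finite B\<close> sum.subset_diff[of V B] by (simp add: V_def card_cartesian_product add.commute)
  also have "\<dots> \<le> card V * n + card (B - V) * D"
    using sum_mono[of V "\<lambda>y. card (I y)" "\<lambda>_. n"] sum_mono[of "B - V" "\<lambda>y. card (I y)" "\<lambda>_. D"]
    by (fastforce simp: n_def I_def V_def intro: card_mono \<open>finite B\<close>)
  also have "\<dots> \<le> card V * n + n * D"
    using card_mono[OF \<open>finite B\<close>, of "B - V"] by (simp add: n_def)
  finally have "card E \<le> card V * n + n * D" .
  then have "n * n \<le> 2 * r * (card V * n + n * D)"
    using dense order_trans mult_le_mono2 unfolding n_def power2_eq_square by blast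
  then have "n * n \<le> n * (2 * r * card V + 2 * r * D)"
    by (simp add: algebra_simps)
  then have "n \<le> 2 * r * card V + 2 * r * D" if "0 < n"
    using that by simp
  then have "2 * r * D \<le> 2 * r * card V" if "0 < n"
    using that \<open>4 * r * D \<le> card B\<close> unfolding n_def by linarith
  then have "D \<le> card V" if "0 < n"
    using that \<open>0 < r\<close> by simp
  moreover have "D = 0" if "n = 0"
    using that \<open>0 < r\<close> \<open>4 * r * D \<le> card B\<close> unfolding n_def by simp
  ultimately show ?thesis
    unfolding V_def I_def by fastforce
qed

lemma diff_one_mult_choose_less:
  fixes n D t :: nat
  assumes "0 < t" "t \<le> n" and power: "t ^ (t + 1) * n ^ t \<le> D ^ (t + 1)"
  shows "(t - 1) * (n choose t) < D * (D choose t)"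
proof -
  have "1 \<le> n ^ t"
    using \<open>0 < t\<close> \<open>t \<le> n\<close> by simp
  then have "t ^ (t + 1) \<le> D ^ (t + 1)"
    using power by (metis mult_le_mono2 mult_1_right le_trans)
  then have "t \<le> D"
    using power_le_imp_le_base[of t t D] by simp
  have "real t * real (n choose t) \<le> real t * real n ^ t"
    using binomial_le_pow[OF \<open>t \<le> n\<close>] by (metis of_nat_le_iff of_nat_power mult_left_mono of_nat_0_le_iff)
  also have "\<dots> \<le> real D * (real D / real t) ^ t"
    using power \<open>0 < t\<close>
    by (simp add: power_divide field_simps flip: of_nat_power of_nat_mult)
  also have "\<dots> \<le> real D * real (D choose t)"
    using binomial_ge_n_over_k_pow_k[OF \<open>t \<le> D\<close>] by (intro mult_left_mono) auto
  finally have "t * (n choose t) \<le> D * (D choose t)"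
    by (simp flip: of_nat_mult)
  moreover have "0 < n choose t"
    using \<open>t \<le> n\<close> by simp
  ultimately show ?thesis
    using \<open>0 < t\<close> by (metis diff_less less_le_trans mult_less_mono1 zero_less_one)
qed

lemma diff_one_mult_choose_less_div:
  fixes n r t :: nat
  assumes "0 < r" "0 < t" and large: "(8 * r * t) ^ (t + 1) \<le> n"
  shows "(t - 1) * (n choose t) < (n div (4 * r)) * (n div (4 * r) choose t)"
proof -
  define D where "D = n div (4 * r)"
  have "8 * r * t \<le> (8 * r * t) ^ (t + 1)"
    using \<open>0 < r\<close> \<open>0 < t\<close> by (simp add: self_le_power)
  with large have "8 * r * t \<le> n"
    by linarith
  moreover have "r \<le> r * t" "t \<le> r * t"
    using \<open>0 < r\<close> \<open>0 < t\<close> by simp_all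
  moreover have "n = 4 * r * D + n mod (4 * r)" "n mod (4 * r) < 4 * r"
    using \<open>0 < r\<close> unfolding D_def by simp_all
  ultimately have "n \<le> 8 * r * D" "t \<le> n"
    by linarith+
  have "(8 * r) ^ (t + 1) * (t ^ (t + 1) * n ^ t) = (8 * r * t) ^ (t + 1) * n ^ t"
    by (simp add: power_mult_distrib)
  also have "\<dots> \<le> n * n ^ t"
    using large by simp
  also have "\<dots> = n ^ (t + 1)"
    by simp
  also have "\<dots> \<le> (8 * r * D) ^ (t + 1)"
    using \<open>n \<le> 8 * r * D\<close> by (rule power_mono) simp
  also have "\<dots> = (8 * r) ^ (t + 1) * D ^ (t + 1)"
    by (simp add: power_mult_distrib)
  finally have "t ^ (t + 1) * n ^ t \<le> D ^ (t + 1)"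
    using \<open>0 < r\<close> by simp
  then show ?thesis
    unfolding D_def by (rule diff_one_mult_choose_less[OF \<open>0 < t\<close> \<open>t \<le> n\<close>])
qed

lemma complete_bipartite_in_dense_relation:
  fixes E :: "('a \<times> 'a) set"
  assumes "finite B" "E \<subseteq> B \<times> B" "\<And>x. (x, x) \<notin> E" "0 < r" "0 < t"
    and dense: "card B ^ 2 \<le> 2 * r * card E"
    and large: "(8 * r * t) ^ (t + 1) \<le> card B"
  shows "\<exists>T U. T \<subseteq> B \<and> U \<subseteq> B \<and> T \<inter> U = {} \<and> card T = t \<and> card U = t \<and> T \<times> U \<subseteq> E"
proof (rule complete_bipartite_if_many_high_indegree)
  show "card B div (4 * r) \<le> card {y\<in>B. card B div (4 * r) \<le> card {x\<in>B. (x, y) \<in> E}}"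
    using assms(1,2,4) times_div_less_eq_dividend dense by (rule many_vertices_of_high_indegree)
  show "(t - 1) * (card B choose t) < card B div (4 * r) * (card B div (4 * r) choose t)"
    using assms(4,5) large by (rule diff_one_mult_choose_less_div)
qed (use assms in auto)

definition link :: "'a set set \<Rightarrow> 'a set \<Rightarrow> 'a \<times> 'a \<Rightarrow> 'a set" where
  "link H A xy = {a\<in>A. {a, fst xy, snd xy} \<in> H}"

lemma link_diag_empty:
  assumes "AB_3graph H A B"
  shows "link H A (x, x) = {}"
proof -
  have "card {a, x, x} \<noteq> 3" for a
    by (simp add: card_insert_if)
  then show ?thesis
    using assms unfolding AB_3graph_def link_def by auto
qed

lemma AB_3graph_edgeE:
  assumes "AB_3graph H A B" "e \<in> H"
  obtains a x y where "a \<in> A" "x \<in> B" "y \<in> B" "e = {a, x, y}"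
proof -
  have "e \<subseteq> A \<union> B" "card (e \<inter> A) = 1" "card (e \<inter> B) = 2"
    using assms unfolding AB_3graph_def by auto
  then obtain a x y where "e \<inter> A = {a}" "e \<inter> B = {x, y}"
    by (metis card_1_singletonE card_2_iff)
  with \<open>e \<subseteq> A \<union> B\<close> have "e = {a, x, y}" "a \<in> A" "x \<in> B" "y \<in> B"
    by auto
  then show ?thesis
    using that by blast
qed

lemma card_le_sum_card_link:
  assumes "AB_3graph H A B" "finite A" "finite B"
  shows "card H \<le> (\<Sum>xy\<in>B \<times> B. card (link H A xy))"
proof -
  have "H \<subseteq> (\<lambda>(xy, a). {a, fst xy, snd xy}) ` (SIGMA xy:B \<times> B. link H A xy)"
  proof
    fix e assume "e \<in> H"
    with assms(1) obtain a x y where "a \<in> A" "x \<in> B" "y \<in> B" "e = {a, x, y}"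
      by (rule AB_3graph_edgeE)
    with \<open>e \<in> H\<close> show "e \<in> (\<lambda>(xy, a). {a, fst xy, snd xy}) ` (SIGMA xy:B \<times> B. link H A xy)"
      unfolding link_def by (auto intro!: image_eqI[where x = "((x, y), a)"])
  qed
  then have "card H \<le> card (SIGMA xy:B \<times> B. link H A xy)"
    using assms(2,3) by (intro surj_card_le) (auto simp: link_def)
  also have "\<dots> = (\<Sum>xy\<in>B \<times> B. card (link H A xy))"
    using assms(2,3) by (intro card_SigmaI) (auto simp: link_def)
  finally show ?thesis .
qed

lemma card_le_card_pairs_with_large_link:
  assumes "AB_3graph H A B" "finite A" "finite B"
  shows "card H \<le> card {xy\<in>B \<times> B. t \<le> card (link H A xy)} * card A + card B ^ 2 * (t - 1)"
proof -
  have "card (link H A xy) \<le> card A" for xy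
    unfolding link_def using \<open>finite A\<close> by (intro card_mono) auto
  then have "(\<Sum>xy\<in>B \<times> B. card (link H A xy))
      \<le> card {xy\<in>B \<times> B. t \<le> card (link H A xy)} * card A + card (B \<times> B) * (t - 1)"
    using \<open>finite B\<close> by (intro sum_le_card_threshold) auto
  then show ?thesis
    using card_le_sum_card_link[OF assms] by (simp add: card_cartesian_product power2_eq_square)
qed

lemma many_pairs_with_large_link:
  fixes \<eta> :: real
  assumes "AB_3graph H A B" "finite A" "finite B" "\<eta> \<le> 1" "0 < t"
    and t_le: "real t \<le> \<eta> * card A / 2" and "2 * card A \<le> card B"
    and dense: "\<eta> * (card A * (card B choose 2)) \<le> card H"
  shows "card B ^ 2 \<le> 2 * card A * card {xy\<in>B \<times> B. t \<le> card (link H A xy)}"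
proof -
  define k where "k = card A"
  define n where "n = card B"
  define q where "q = card {xy\<in>B \<times> B. t \<le> card (link H A xy)}"
  have "card H \<le> q * k + n ^ 2 * (t - 1)"
    using card_le_card_pairs_with_large_link[OF assms(1-3), of t] unfolding q_def k_def n_def .
  then have "real (card H) \<le> real (q * k + n ^ 2 * (t - 1))"
    by (simp only: of_nat_le_iff)
  also have "\<dots> = real q * k + real n ^ 2 * (real t - 1)"
    using \<open>0 < t\<close> by (simp add: of_nat_diff Suc_le_eq)
  also have "\<dots> \<le> real q * k + real n ^ 2 * (\<eta> * k / 2 - 1)"
    using t_le unfolding k_def by (intro add_left_mono mult_left_mono) auto
  finally have "real (card H) \<le> real q * k + real n ^ 2 * (\<eta> * k / 2 - 1)" .
  moreover have "\<eta> * k * (real n * (real n - 1) / 2) \<le> card H"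
    using dense unfolding k_def n_def by (simp add: real_choose_two mult.assoc)
  moreover have "\<eta> * k * (real n * (real n - 1) / 2) = \<eta> * k * real n ^ 2 / 2 - \<eta> * k * n / 2"
    "real n ^ 2 * (\<eta> * k / 2 - 1) = \<eta> * k * real n ^ 2 / 2 - real n ^ 2"
    by (simp_all add: power2_eq_square field_simps)
  ultimately have "real n ^ 2 - \<eta> * k * n / 2 \<le> real q * k"
    by linarith
  moreover have "\<eta> * k * n \<le> real k * n"
    using mult_right_mono[OF \<open>\<eta> \<le> 1\<close>, of "real k * n"] by (simp add: mult.assoc)
  moreover have "2 * k * n \<le> n * n"
    using \<open>2 * card A \<le> card B\<close> unfolding k_def n_def by (rule mult_le_mono1)
  then have "2 * (real k * n) \<le> real n ^ 2"
    unfolding power2_eq_square by (metis of_nat_le_iff of_nat_mult of_nat_numeral mult.assoc)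
  moreover have "0 \<le> real q * k"
    by simp
  ultimately have "real n ^ 2 \<le> 2 * (real q * k)"
    by linarith
  then have "n ^ 2 \<le> 2 * (q * k)"
    by (metis of_nat_le_iff of_nat_mult of_nat_power of_nat_numeral)
  then show ?thesis
    unfolding k_def n_def q_def by (simp add: mult_ac)
qed

lemma dense_pairs_with_common_link:
  fixes \<eta> :: real
  assumes "AB_3graph H A B" "finite A" "finite B" "\<eta> \<le> 1" "0 < t"
    and t_le: "real t \<le> \<eta> * card A / 2" and "2 * card A \<le> card B"
    and dense: "\<eta> * (card A * (card B choose 2)) \<le> card H"
  obtains S where "S \<subseteq> A" "card S = t"
    "card B ^ 2 \<le> 2 * (card A * 2 ^ card A) * card {xy\<in>B \<times> B. S \<subseteq> link H A xy}"
proof -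
  have "real t \<le> card A"
    using t_le mult_right_mono[OF \<open>\<eta> \<le> 1\<close>, of "real (card A)"] by simp
  then obtain S where "S \<subseteq> A" "card S = t" and pigeonhole:
    "card {xy\<in>B \<times> B. t \<le> card (link H A xy)} \<le> 2 ^ card A * card {xy\<in>B \<times> B. S \<subseteq> link H A xy}"
    using ex_subset_contained_in_many[OF \<open>finite A\<close>, of "B \<times> B" "link H A" t] \<open>finite B\<close>
    by (auto simp: link_def)
  have "card B ^ 2 \<le> 2 * card A * card {xy\<in>B \<times> B. t \<le> card (link H A xy)}"
    using many_pairs_with_large_link[OF assms] .
  also have "\<dots> \<le> 2 * (card A * 2 ^ card A) * card {xy\<in>B \<times> B. S \<subseteq> link H A xy}"
    using pigeonhole by (simp add: mult.assoc)
  finally show ?thesis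
    using that \<open>S \<subseteq> A\<close> \<open>card S = t\<close> by blast
qed

lemma AB_3graph_contains_complete_3partite:
  fixes \<eta> :: real
  assumes "AB_3graph H A B" "finite A" "finite B" "\<eta> \<le> 1" and t_le: "real t \<le> \<eta> * card A / 2"
    and dense: "\<eta> * (card A * (card B choose 2)) \<le> card H"
    and large: "(8 * (card A * 2 ^ card A) * t) ^ (t + 1) \<le> card B"
  shows "\<exists>A' B' B''. A' \<subseteq> A \<and> B' \<subseteq> B \<and> B'' \<subseteq> B \<and> B' \<inter> B'' = {} \<and>
    card A' = t \<and> card B' = t \<and> card B'' = t \<and> contains_complete_3partite H A' B' B''"
proof (cases "t = 0")
  case True
  then show ?thesis
    by (intro exI[of _ "{}"]) (auto simp: contains_complete_3partite_def)
next
  case False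
  define r where "r = card A * 2 ^ card A"
  have "\<eta> * card A \<le> card A"
    using mult_right_mono[OF \<open>\<eta> \<le> 1\<close>, of "real (card A)"] by simp
  then have "t \<le> card A"
    using t_le by simp
  then have "0 < r" "card A \<le> r" "r \<le> r * t" "8 * r * t \<le> (8 * r * t) ^ (t + 1)"
    using False unfolding r_def by (auto simp: self_le_power)
  then have "2 * card A \<le> card B"
    using large unfolding r_def by linarith
  moreover have "0 < t"
    using False by simp
  ultimately obtain S where "S \<subseteq> A" "card S = t"
    and dense_S: "card B ^ 2 \<le> 2 * r * card {xy\<in>B \<times> B. S \<subseteq> link H A xy}"
    using dense_pairs_with_common_link[OF assms(1-4) _ t_le _ dense] unfolding r_def by blast
  define E where "E = {xy\<in>B \<times> B. S \<subseteq> link H A xy}"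
  have "E \<subseteq> B \<times> B" and E_irrefl: "\<And>x. (x, x) \<notin> E"
    using link_diag_empty[OF assms(1)] \<open>card S = t\<close> \<open>0 < t\<close> unfolding E_def by auto
  moreover have "card B ^ 2 \<le> 2 * r * card E"
    using dense_S unfolding E_def .
  moreover have "(8 * r * t) ^ (t + 1) \<le> card B"
    using large unfolding r_def .
  ultimately obtain T U where "T \<subseteq> B" "U \<subseteq> B" "T \<inter> U = {}" "card T = t" "card U = t"
    and TU: "T \<times> U \<subseteq> E"
    using complete_bipartite_in_dense_relation[OF \<open>finite B\<close> _ E_irrefl \<open>0 < r\<close> \<open>0 < t\<close>] by blast
  moreover have "contains_complete_3partite H S T U"
    unfolding contains_complete_3partite_def
  proof (intro ballI)
    fix a x y assume "a \<in> S" "x \<in> T" "y \<in> U"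
    then have "S \<subseteq> link H A (x, y)"
      using TU unfolding E_def by blast
    with \<open>a \<in> S\<close> show "{a, x, y} \<in> H"
      unfolding link_def by auto
  qed
  ultimately show ?thesis
    using \<open>S \<subseteq> A\<close> \<open>card S = t\<close> by blast
qed

lemma eventually_pow_le_two_pow_square:
  fixes c :: real
  assumes "0 < c"
  shows "\<forall>\<^sub>F m in sequentially. \<forall>k t. k \<le> m \<longrightarrow> 2 * t \<le> k \<longrightarrow>
    real ((8 * (k * 2 ^ k) * t) ^ (t + 1)) \<le> c * 2 ^ (m ^ 2)"
proof -
  have "((\<lambda>x::real. (8 * x ^ 2 * 2 powr x) powr (x / 2 + 1) / 2 powr (x ^ 2)) \<longlongrightarrow> 0) at_top"
    by real_asymp
  then have "((\<lambda>m. (8 * real m ^ 2 * 2 powr m) powr (real m / 2 + 1) / 2 powr (real m ^ 2))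
      \<longlongrightarrow> 0) sequentially"
    by (rule filterlim_compose[OF _ filterlim_real_sequentially])
  then have "\<forall>\<^sub>F m in sequentially.
      (8 * real m ^ 2 * 2 powr m) powr (real m / 2 + 1) / 2 powr (real m ^ 2) < c"
    using \<open>0 < c\<close> by (rule order_tendstoD(2))
  then have "\<forall>\<^sub>F m in sequentially. (8 * real m ^ 2 * 2 ^ m) powr (real m / 2 + 1) < c * 2 ^ (m ^ 2)"
    by (rule eventually_mono) (simp add: powr_realpow divide_less_eq flip: of_nat_power)
  then show ?thesis
  proof (rule eventually_mono, intro allI impI)
    fix m k t :: nat
    assume bound: "(8 * real m ^ 2 * 2 ^ m) powr (real m / 2 + 1) < c * 2 ^ (m ^ 2)"
      and "k \<le> m" "2 * t \<le> k"
    define b where "b = 8 * (k * 2 ^ k) * t"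
    show "real (b ^ (t + 1)) \<le> c * 2 ^ (m ^ 2)"
    proof (cases "t = 0")
      case True
      then show ?thesis
        using \<open>0 < c\<close> by (simp add: b_def)
    next
      case False
      have "b \<le> 8 * (m * 2 ^ m) * m"
        unfolding b_def using \<open>k \<le> m\<close> \<open>2 * t \<le> k\<close>
        by (intro mult_mono power_increasing) auto
      then have "real b \<le> real (8 * (m * 2 ^ m) * m)"
        by (simp only: of_nat_le_iff)
      then have "real b \<le> 8 * real m ^ 2 * 2 ^ m"
        by (simp add: power2_eq_square mult_ac)
      have "1 \<le> b"
        using False \<open>2 * t \<le> k\<close> unfolding b_def by simp
      have "real (b ^ (t + 1)) = real b powr real (t + 1)"
        using \<open>1 \<le> b\<close> powr_realpow[of "real b" "t + 1"] by (simp only: of_nat_power)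
      also have "\<dots> \<le> real b powr (real m / 2 + 1)"
        using \<open>1 \<le> b\<close> \<open>k \<le> m\<close> \<open>2 * t \<le> k\<close> by (intro powr_mono) auto
      also have "\<dots> \<le> (8 * real m ^ 2 * 2 ^ m) powr (real m / 2 + 1)"
        using \<open>real b \<le> 8 * real m ^ 2 * 2 ^ m\<close> by (intro powr_mono2) auto
      finally show ?thesis
        using bound by linarith
    qed
  qed
qed

lemma card_ge_if_d3_ge:
  fixes \<eta> :: real
  assumes "0 < \<eta>" "\<eta> \<le> d3 H A B"
  shows "\<eta> * (card A * (card B choose 2)) \<le> card H"
proof -
  have "real (card A) * real (card B choose 2) \<noteq> 0"
  proof
    assume "real (card A) * real (card B choose 2) = 0"
    then have "d3 H A B = 0"
      unfolding d3_def by simp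
    with assms show False
      by simp
  qed
  then show ?thesis
    using assms(2) unfolding d3_def by (simp add: le_divide_eq)
qed

theorem lemma5:
  fixes c1 c2 \<eta> :: real
  assumes "0 < c1" "c1 < 1" "0 < c2" "c2 < 1" "0 < \<eta>" "\<eta> \<le> 1"
  shows "\<exists>M::nat. \<forall>m\<ge>M. \<forall>(H :: 'a set set) A B.
     AB_3graph H A B \<and> finite A \<and> finite B \<and>
     card A = nat \<lfloor>c1 * real m\<rfloor> \<and>
     real (card B) \<ge> c2 * 2 ^ (m ^ 2) \<and>
     d3 H A B \<ge> \<eta>
     \<longrightarrow> (\<exists>A' B' B''. A' \<subseteq> A \<and> B' \<subseteq> B \<and> B'' \<subseteq> B \<and> B' \<inter> B'' = {} \<and>
            card A' = nat \<lfloor>\<eta> * real (card A) / 2\<rfloor> \<and>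
            card B' = nat \<lfloor>\<eta> * real (card A) / 2\<rfloor> \<and>
            card B'' = nat \<lfloor>\<eta> * real (card A) / 2\<rfloor> \<and>
            contains_complete_3partite H A' B' B'')"
proof -
  obtain M where M: "\<And>m k t. M \<le> m \<Longrightarrow> k \<le> m \<Longrightarrow> 2 * t \<le> k \<Longrightarrow>
      real ((8 * (k * 2 ^ k) * t) ^ (t + 1)) \<le> c2 * 2 ^ (m ^ 2)"
    using eventually_pow_le_two_pow_square[OF \<open>0 < c2\<close>] unfolding eventually_sequentially by blast
  show ?thesis
  proof (intro exI[of _ M] allI impI, elim conjE)
    fix m :: nat and H :: "'a set set" and A B
    assume "M \<le> m" "AB_3graph H A B" "finite A" "finite B" and card_A: "card A = nat \<lfloor>c1 * real m\<rfloor>"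
      and card_B: "c2 * 2 ^ (m ^ 2) \<le> real (card B)" and "\<eta> \<le> d3 H A B"
    define t where "t = nat \<lfloor>\<eta> * real (card A) / 2\<rfloor>"
    have "real (card A) \<le> c1 * m" "c1 * m \<le> m"
      using card_A mult_right_mono[of c1 1 "real m"] assms(1,2) by (simp_all add: of_nat_floor)
    then have "card A \<le> m"
      by linarith
    have t_le: "real t \<le> \<eta> * card A / 2"
      unfolding t_def using \<open>0 < \<eta>\<close> by (intro of_nat_floor) simp
    then have "2 * t \<le> card A"
      using mult_right_mono[OF \<open>\<eta> \<le> 1\<close>, of "real (card A)"] by simp
    then have "real ((8 * (card A * 2 ^ card A) * t) ^ (t + 1)) \<le> real (card B)"
      using M[OF \<open>M \<le> m\<close> \<open>card A \<le> m\<close>] card_B by (meson order_trans)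
    then have "(8 * (card A * 2 ^ card A) * t) ^ (t + 1) \<le> card B"
      by (simp only: of_nat_le_iff)
    with AB_3graph_contains_complete_3partite[OF \<open>AB_3graph H A B\<close> \<open>finite A\<close> \<open>finite B\<close>
        \<open>\<eta> \<le> 1\<close> t_le card_ge_if_d3_ge[OF \<open>0 < \<eta>\<close> \<open>\<eta> \<le> d3 H A B\<close>]]
    show "\<exists>A' B' B''. A' \<subseteq> A \<and> B' \<subseteq> B \<and> B'' \<subseteq> B \<and> B' \<inter> B'' = {} \<and>
        card A' = nat \<lfloor>\<eta> * real (card A) / 2\<rfloor> \<and> card B' = nat \<lfloor>\<eta> * real (card A) / 2\<rfloor> \<and>
        card B'' = nat \<lfloor>\<eta> * real (card A) / 2\<rfloor> \<and> contains_complete_3partite H A' B' B''"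
      unfolding t_def .
  qed
qed

end
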